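(* Let $p$ be a prime, let $G$ be a cyclic group of order $p$, and let $S$ be an unsplittable minimal zero-sum sequence over $G$. Let $T$ be a subsequence of $S$ with $|\operatorname{supp}(T)|\ge 2$. Then there exists $g\in\operatorname{supp}(T)$ such that $|\Sigma(g^{-1}T)|\ge 2|g^{-1}T|-1$, where $g^{-1}T$ denotes the sequence $T$ with one copy of $g$ removed.
   Context: A sequence over $G$ is a finite unordered list of elements of $G$ with repetition allowed; $|T|$ is the length, $\sigma(T)$ the sum of terms, and $\operatorname{supp}(T)$ the set of elements occurring. $T$ is a subsequence of $S$ if each element occurs in $T$ at most as often as in $S$. $\Sigma(T)$ is the set of sums $\sigma(U)$ over all subsequences $U$ of $T$ with $|U|\ge1$. $S$ is a minimal zero-sum sequence if $\sigma(S)=0$ and no subsequence $U$ with $1\le|U|<|S|$ has $\sigma(U)=0$. A minimal zero-sum sequence $S$ is unsplittable if there do not exist $h\in\operatorname{supp}(S)$ and $y,z\in G$ with $y+z=h$ such that the sequence obtained from $S$ by replacing one copy of $h$ with the two terms $y,z$ is again a minimal zero-sum sequence. *)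

theory Defs
  imports Main "HOL-Library.Multiset" "HOL-Library.Cardinality" "HOL-Computational_Algebra.Primes"
begin

text \<open>Sequences over an abelian group are finite multisets over it.\<close>

definition cyclic_group :: "'a::ab_group_add itself \<Rightarrow> bool" where
  "cyclic_group _ \<longleftrightarrow> (\<exists>g::'a. \<forall>x::'a. \<exists>k::int.
      x = (if k \<ge> 0 then (\<Sum>i<nat k. g) else - (\<Sum>i<nat (- k). g)))"

definition Sigma_set :: "'a::comm_monoid_add multiset \<Rightarrow> 'a set" where
  "Sigma_set T = {sum_mset U | U. U \<subseteq># T \<and> size U \<ge> 1}"

definition minimal_zero_sum :: "'a::comm_monoid_add multiset \<Rightarrow> bool" where
  "minimal_zero_sum S \<longleftrightarrow> sum_mset S = 0 \<and>
     \<not> (\<exists>U. U \<subseteq># S \<and> 1 \<le> size U \<and> size U < size S \<and> sum_mset U = 0)"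

definition unsplittable :: "'a::comm_monoid_add multiset \<Rightarrow> bool" where
  "unsplittable S \<longleftrightarrow> minimal_zero_sum S \<and>
     \<not> (\<exists>h \<in># S. \<exists>y z. y + z = h \<and> minimal_zero_sum (S - {#h#} + {#y, z#}))"

end

(* Removing a suitable term g from T leaves a sequence U that still has two distinct values,
   or has at most one term. As a proper subsequence of the minimal zero-sum sequence S, U is
   zero-sum free. Unsplittability of S implies that every group element is a subsum of S with one
   term removed (otherwise that term could be split), and this excludes subsequences of the
   form (a x) x^a with a >= 2.

   For such U over a group of prime order p, the subset sums of U, empty sum included, number
   at least 2|U|; this is shown by induction on |U|. If removing either of two distinct terms
   w1, w2 loses at most one subset sum, then the subset sums of U - wi form the progression
   0, wi, ..., M wi, so sum U = (M + 1) w1 = (M + 1) w2 with M + 1 < p, which is impossible.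
   The remaining shape b a^k is counted directly: its subset sums are two disjoint translates
   of 0, a, ..., k a. *)

theory Submission
  imports Defs
begin

section \<open>Multiples and additive order\<close>

primrec nsmul :: "nat \<Rightarrow> 'a::ab_group_add \<Rightarrow> 'a" where
  "nsmul 0 x = 0"
| "nsmul (Suc n) x = nsmul n x + x"

lemma nsmul_add: "nsmul (m + n) x = nsmul m x + nsmul n x"
  by (induction n) (simp_all add: add.assoc)

lemma nsmul_diff: "n \<le> m \<Longrightarrow> nsmul (m - n) x = nsmul m x - nsmul n x"
  using nsmul_add[of "m - n" n x] by simp

lemma nsmul_mult: "nsmul (m * n) x = nsmul m (nsmul n x)"
  by (induction m) (simp_all add: nsmul_add add.commute)

lemma nsmul_zero [simp]: "nsmul n 0 = 0"
  by (induction n) simp_all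

lemma nsmul_diff_distrib: "nsmul n (x - y) = nsmul n x - nsmul n y"
  by (induction n) (simp_all add: algebra_simps)

lemma sum_mset_replicate_mset_nsmul [simp]: "sum_mset (replicate_mset n x) = nsmul n x"
  by (induction n) (simp_all add: add.commute)

lemma sum_lessThan_const_nsmul: "(\<Sum>i<n. x) = nsmul n x"
  by (induction n) simp_all

definition add_order :: "'a::ab_group_add \<Rightarrow> nat" where
  "add_order x = (LEAST d. 0 < d \<and> nsmul d x = 0)"

lemma ex_nsmul_eq_0:
  fixes x :: "'a::{ab_group_add,finite}"
  shows "\<exists>d. 0 < d \<and> nsmul d x = 0"
proof -
  have "\<not> inj_on (\<lambda>i. nsmul i x) {..CARD('a)}"
  proof
    assume "inj_on (\<lambda>i. nsmul i x) {..CARD('a)}"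
    then have "card ((\<lambda>i. nsmul i x) ` {..CARD('a)}) = Suc CARD('a)"
      by (simp add: card_image)
    moreover have "card ((\<lambda>i. nsmul i x) ` {..CARD('a)}) \<le> CARD('a)"
      by (rule card_mono) auto
    ultimately show False by simp
  qed
  then obtain i j where "i < j" "nsmul i x = nsmul j x"
    unfolding inj_on_def by (metis linorder_neqE_nat)
  then show ?thesis
    by (intro exI[of _ "j - i"]) (simp add: nsmul_diff)
qed

lemma
  fixes x :: "'a::{ab_group_add,finite}"
  shows add_order_pos: "0 < add_order x"
    and nsmul_add_order [simp]: "nsmul (add_order x) x = 0"
  using LeastI_ex[OF ex_nsmul_eq_0[of x]] unfolding add_order_def by auto

lemma nsmul_nonzero_below_add_order:
  "0 < n \<Longrightarrow> n < add_order x \<Longrightarrow> nsmul n x \<noteq> 0"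
  unfolding add_order_def using not_less_Least by blast

lemma nsmul_mod_add_order:
  fixes x :: "'a::{ab_group_add,finite}"
  shows "nsmul (n mod add_order x) x = nsmul n x"
proof -
  have "nsmul n x = nsmul (n div add_order x * add_order x) x + nsmul (n mod add_order x) x"
    by (metis div_mult_mod_eq nsmul_add)
  then show ?thesis by (simp add: nsmul_mult)
qed

lemma nsmul_eq_0_iff_add_order_dvd:
  fixes x :: "'a::{ab_group_add,finite}"
  shows "nsmul n x = 0 \<longleftrightarrow> add_order x dvd n"
proof -
  have "n mod add_order x < add_order x"
    using add_order_pos by (rule mod_less_divisor)
  then have "nsmul (n mod add_order x) x = 0 \<longleftrightarrow> n mod add_order x = 0"
    by (cases "n mod add_order x = 0") (simp_all add: nsmul_nonzero_below_add_order)
  then show ?thesis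
    by (simp only: nsmul_mod_add_order dvd_eq_mod_eq_0)
qed

lemma inj_on_nsmul_add_order:
  fixes x :: "'a::{ab_group_add,finite}"
  shows "inj_on (\<lambda>n. nsmul n x) {..<add_order x}"
proof (rule linorder_inj_onI)
  fix i j assume "i < j" "j \<in> {..<add_order x}"
  then have "nsmul (j - i) x \<noteq> 0"
    by (intro nsmul_nonzero_below_add_order) auto
  with \<open>i < j\<close> show "nsmul i x \<noteq> nsmul j x"
    by (simp add: nsmul_diff)
qed linarith

lemma add_order_le_card:
  fixes x :: "'a::{ab_group_add,finite}"
  shows "add_order x \<le> CARD('a)"
proof -
  have "add_order x = card ((\<lambda>n. nsmul n x) ` {..<add_order x})"
    by (simp add: card_image inj_on_nsmul_add_order)
  also have "\<dots> \<le> CARD('a)"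
    by (rule card_mono) auto
  finally show ?thesis .
qed

lemma cyclic_group_obtains_generator:
  fixes t :: "'a::{ab_group_add,finite} itself"
  assumes "cyclic_group t"
  obtains g :: 'a where "\<And>x. \<exists>n. x = nsmul n g"
proof -
  obtain g :: 'a where g: "\<forall>x::'a. \<exists>k::int.
      x = (if k \<ge> 0 then (\<Sum>i<nat k. g) else - (\<Sum>i<nat (- k). g))"
    using assms unfolding cyclic_group_def by blast
  have minus_multiple: "- nsmul m g = nsmul (m * (add_order g - 1)) g" for m
  proof -
    have "m * (add_order g - 1) + m = m * add_order g"
      using add_order_pos[of g] by (simp add: algebra_simps)
    then have "nsmul (m * (add_order g - 1)) g + nsmul m g = nsmul m (nsmul (add_order g) g)"
      by (metis nsmul_add nsmul_mult)
    then show ?thesis by (simp add: neg_eq_iff_add_eq_0 add.commute)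
  qed
  have "\<exists>n. x = nsmul n g" for x
  proof -
    obtain k where k: "x = (if k \<ge> 0 then nsmul (nat k) g else - nsmul (nat (- k)) g)"
      using g unfolding sum_lessThan_const_nsmul by blast
    show ?thesis
    proof (cases "k \<ge> 0")
      case True
      with k show ?thesis by auto
    next
      case False
      with k show ?thesis unfolding minus_multiple by auto
    qed
  qed
  then show ?thesis by (rule that)
qed

lemma add_order_generator_eq_card:
  fixes g :: "'a::{ab_group_add,finite}"
  assumes "\<And>x. \<exists>n. x = nsmul n g"
  shows "add_order g = CARD('a)"
proof -
  have "UNIV \<subseteq> (\<lambda>n. nsmul n g) ` {..<add_order g}"
  proof
    fix x :: 'a
    obtain n where "x = nsmul n g" using assms by blast
    then have "x = nsmul (n mod add_order g) g"
      by (simp only: nsmul_mod_add_order)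
    then show "x \<in> (\<lambda>n. nsmul n g) ` {..<add_order g}"
      using add_order_pos[of g] by auto
  qed
  then have "CARD('a) \<le> card ((\<lambda>n. nsmul n g) ` {..<add_order g})"
    by (simp add: card_mono)
  also have "\<dots> \<le> add_order g"
    using card_image_le[of "{..<add_order g}"] by simp
  finally have "CARD('a) \<le> add_order g" .
  with add_order_le_card show ?thesis by (rule antisym)
qed

lemma add_order_prime_cyclic:
  fixes x :: "'a::{ab_group_add,finite}" and t :: "'a itself"
  assumes "prime CARD('a)" "cyclic_group t" "x \<noteq> 0"
  shows "add_order x = CARD('a)"
proof -
  obtain g :: 'a where g: "\<And>x. \<exists>n. x = nsmul n g"
    using cyclic_group_obtains_generator[OF assms(2)] by blast
  then obtain m where "x = nsmul m g" by blast
  then have "nsmul CARD('a) x = nsmul m (nsmul CARD('a) g)"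
    by (simp flip: nsmul_mult add: mult.commute)
  also have "\<dots> = 0"
    by (simp add: add_order_generator_eq_card[OF g, symmetric])
  finally have "add_order x dvd CARD('a)"
    by (simp add: nsmul_eq_0_iff_add_order_dvd)
  moreover have "add_order x \<noteq> 1"
    using assms(3) by (metis nsmul.simps add_0 nsmul_add_order One_nat_def)
  ultimately show ?thesis
    using assms(1) unfolding prime_nat_iff by blast
qed

section \<open>Groups of prime order\<close>

locale prime_cyclic_group =
  fixes G :: "'a::{ab_group_add,finite} itself"
  assumes prime_card: "prime CARD('a)"
    and cyclic: "cyclic_group G"
begin

lemma card_ge_2: "2 \<le> CARD('a)"
  using prime_card prime_ge_2_nat by blast

lemma add_order_eq_card: "(x::'a) \<noteq> 0 \<Longrightarrow> add_order x = CARD('a)"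
  by (rule add_order_prime_cyclic[OF prime_card cyclic])

lemma nsmul_eq_0_iff: "(x::'a) \<noteq> 0 \<Longrightarrow> nsmul n x = 0 \<longleftrightarrow> CARD('a) dvd n"
  by (simp add: nsmul_eq_0_iff_add_order_dvd add_order_eq_card)

lemma nsmul_card [simp]: "nsmul CARD('a) (x::'a) = 0"
  by (cases "x = 0") (simp_all add: nsmul_eq_0_iff)

lemma nsmul_card_minus_1: "nsmul (CARD('a) - 1) (x::'a) = - x"
proof -
  have "Suc (CARD('a) - 1) = CARD('a)"
    using card_ge_2 by simp
  then have "nsmul (CARD('a) - 1) x + x = nsmul CARD('a) x"
    by (metis nsmul.simps(2))
  then show ?thesis by (simp add: eq_neg_iff_add_eq_0)
qed

lemma inj_on_nsmul: "(x::'a) \<noteq> 0 \<Longrightarrow> inj_on (\<lambda>n. nsmul n x) {..<CARD('a)}"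
  using inj_on_nsmul_add_order[of x] by (simp add: add_order_eq_card)

lemma image_nsmul_lessThan_card: "(x::'a) \<noteq> 0 \<Longrightarrow> (\<lambda>n. nsmul n x) ` {..<CARD('a)} = UNIV"
  by (simp add: card_image card_subset_eq inj_on_nsmul)


lemma card_nsmul_image_atMost:
  "(x::'a) \<noteq> 0 \<Longrightarrow> k < CARD('a) \<Longrightarrow> card ((\<lambda>j. nsmul j x) ` {..k}) = Suc k"
  using inj_on_subset[OF inj_on_nsmul[of x], of "{..k}"] by (simp add: card_image subset_eq)

lemma nsmul_notin_above:
  fixes w :: 'a
  assumes w: "w \<noteq> 0" and Xw: "- w \<notin> X" and Y: "(+) w ` X - X \<subseteq> {nsmul m w}"
    and t: "m \<le> t" "t < CARD('a)"
  shows "nsmul t w \<notin> X"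
proof
  assume "nsmul t w \<in> X"
  (* Adding w leaves X only at m w, so all multiples from t w up to (p - 1) w = - w lie in X. *)
  have up: "t + d < CARD('a) \<Longrightarrow> nsmul (t + d) w \<in> X" for d
  proof (induction d)
    case (Suc d)
    have "nsmul (t + Suc d) w = w + nsmul (t + d) w"
      by (simp add: add.commute)
    then have "nsmul (t + Suc d) w \<in> (+) w ` X"
      using Suc by simp
    moreover have "nsmul (t + Suc d) w \<noteq> nsmul m w"
      using inj_on_nsmul[OF w] Suc.prems t(1) unfolding inj_on_def by fastforce
    ultimately show ?case
      using Y by blast
  qed (use \<open>nsmul t w \<in> X\<close> in simp)
  have "nsmul (CARD('a) - 1) w \<in> X"
    using up[of "CARD('a) - 1 - t"] t(2) by simp
  with Xw show False
    by (simp only: nsmul_card_minus_1)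
qed

lemma progression_if_small_translate:
  fixes w :: 'a and X :: "'a set"
  assumes w: "w \<noteq> 0" and X0: "0 \<in> X" and Xw: "- w \<notin> X"
    and small: "card ((+) w ` X \<union> X) \<le> card X + 1"
  obtains M where "M + 2 \<le> CARD('a)" "X = (\<lambda>j. nsmul j w) ` {..M}"
proof -
  define Y where "Y = (+) w ` X - X"
  have "(+) w ` X \<union> X = X \<union> Y" "X \<inter> Y = {}"
    unfolding Y_def by auto
  with small have card_Y: "card Y \<le> 1"
    by (simp add: card_Un_disjoint)
  (* M + 1 is the least index of a multiple of w outside X; (p - 1) w = - w is one. *)
  define P where "P j \<longleftrightarrow> nsmul (Suc j) w \<notin> X" for j
  have "Suc (CARD('a) - 2) = CARD('a) - 1"
    using card_ge_2 by simp
  then have "P (CARD('a) - 2)"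
    unfolding P_def by (simp only: nsmul_card_minus_1 Xw not_False_eq_True)
  define M where "M = (LEAST j. P j)"
  have "P M" "M \<le> CARD('a) - 2"
    unfolding M_def using \<open>P (CARD('a) - 2)\<close> by (auto intro: LeastI Least_le)
  have below: "j \<le> M \<Longrightarrow> nsmul j w \<in> X" for j
  proof (induction j)
    case (Suc j)
    then have "\<not> P j"
      unfolding M_def using not_less_Least[of j P] by simp
    then show ?case
      unfolding P_def by simp
  qed (use X0 in simp)
  have "nsmul (Suc M) w \<in> Y"
    using \<open>P M\<close> below[of M] unfolding P_def Y_def by (auto simp: add.commute)
  with card_Y have Y: "Y = {nsmul (Suc M) w}"
    using card_le_Suc0_iff_eq[of Y] by auto
  then have "(+) w ` X - X \<subseteq> {nsmul (Suc M) w}"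
    unfolding Y_def by (simp only: order_refl)
  then have above: "nsmul t w \<notin> X" if "M < t" "t < CARD('a)" for t
    by (rule nsmul_notin_above[OF w Xw]) (use that in simp_all)
  have "X = (\<lambda>j. nsmul j w) ` {..M}"
  proof (intro equalityI subsetI)
    fix x assume "x \<in> X"
    obtain t where "t < CARD('a)" "x = nsmul t w"
      using image_nsmul_lessThan_card[OF w] by (metis UNIV_I imageE lessThan_iff)
    with above \<open>x \<in> X\<close> have "t \<le> M"
      by (meson not_le)
    with \<open>x = nsmul t w\<close> show "x \<in> (\<lambda>j. nsmul j w) ` {..M}"
      by simp
  qed (use below in auto)
  with \<open>M \<le> CARD('a) - 2\<close> card_ge_2 show ?thesis
    by (intro that) simp_all
qed

end

section \<open>Subset sums and zero-sum free sequences\<close>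

definition subset_sums :: "'a::comm_monoid_add multiset \<Rightarrow> 'a set" where
  "subset_sums U = {sum_mset V | V. V \<subseteq># U}"

definition zero_sum_free :: "'a::comm_monoid_add multiset \<Rightarrow> bool" where
  "zero_sum_free U \<longleftrightarrow> (\<forall>V. V \<subseteq># U \<longrightarrow> V \<noteq> {#} \<longrightarrow> sum_mset V \<noteq> 0)"

definition multiple_pattern_free :: "'a::ab_group_add multiset \<Rightarrow> bool" where
  "multiple_pattern_free U \<longleftrightarrow>
     (\<forall>a x. 2 \<le> a \<longrightarrow> \<not> add_mset (nsmul a x) (replicate_mset a x) \<subseteq># U)"

lemma subset_sums_iff: "s \<in> subset_sums U \<longleftrightarrow> (\<exists>V. V \<subseteq># U \<and> s = sum_mset V)"
  unfolding subset_sums_def by blast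

lemma sum_mset_in_subset_sums: "V \<subseteq># U \<Longrightarrow> sum_mset V \<in> subset_sums U"
  unfolding subset_sums_def by blast

lemma zero_in_subset_sums: "0 \<in> subset_sums U"
  using sum_mset_in_subset_sums[of "{#}" U] by simp

lemma subset_sums_empty [simp]: "subset_sums {#} = {0}"
  unfolding subset_sums_def by auto

lemma subseteq_add_mset_cases:
  assumes "V \<subseteq># add_mset x U"
  obtains "V \<subseteq># U" | V' where "V = add_mset x V'" "V' \<subseteq># U"
proof (cases "x \<in># V")
  case True
  then obtain V' where "V = add_mset x V'"
    by (metis multi_member_split)
  with assms show ?thesis using that(2) by simp
next
  case False
  with assms have "V \<subseteq># U"
    by (simp add: inter_add_left1 subset_mset.inf.absorb_iff2)
  then show ?thesis by (rule that(1))
qed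

lemma subseteq_add_mset_right: "V \<subseteq># U \<Longrightarrow> V \<subseteq># add_mset x U"
  by (meson multi_psub_of_add_self subset_mset.less_imp_le subset_mset.order_trans)

lemma subset_sums_add_mset:
  "subset_sums (add_mset x U) = subset_sums U \<union> (+) x ` subset_sums U"
proof (intro equalityI subsetI)
  fix s assume "s \<in> subset_sums (add_mset x U)"
  then obtain V where V: "V \<subseteq># add_mset x U" "s = sum_mset V"
    by (auto simp: subset_sums_iff)
  from V(1) show "s \<in> subset_sums U \<union> (+) x ` subset_sums U"
  proof (cases rule: subseteq_add_mset_cases)
    case 1
    with V(2) show ?thesis by (simp add: sum_mset_in_subset_sums)
  next
    case (2 V')
    with V(2) show ?thesis by (auto intro: sum_mset_in_subset_sums)
  qed
next
  fix s assume "s \<in> subset_sums U \<union> (+) x ` subset_sums U"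
  then obtain V where V: "V \<subseteq># U" "s = sum_mset V \<or> s = sum_mset (add_mset x V)"
    by (auto simp: subset_sums_iff)
  have "V \<subseteq># add_mset x U"
    using V(1) by (rule subseteq_add_mset_right)
  moreover have "add_mset x V \<subseteq># add_mset x U"
    using V(1) by (simp only: mset_subset_eq_add_mset_cancel)
  ultimately show "s \<in> subset_sums (add_mset x U)"
    using V(2) sum_mset_in_subset_sums by blast
qed

lemma sum_mset_minus_in_subset_sums:
  fixes U :: "'a::ab_group_add multiset"
  assumes "s \<in> subset_sums U"
  shows "sum_mset U - s \<in> subset_sums U"
proof -
  obtain V where V: "V \<subseteq># U" "s = sum_mset V"
    using assms by (auto simp: subset_sums_iff)
  then have "sum_mset U - s = sum_mset (U - V)"
    by (metis add_diff_cancel_right' subset_mset.diff_add sum_mset.union)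
  then show ?thesis
    by (simp add: sum_mset_in_subset_sums)
qed

lemma zero_sum_free_mono: "zero_sum_free U \<Longrightarrow> V \<subseteq># U \<Longrightarrow> zero_sum_free V"
  unfolding zero_sum_free_def by (meson subset_mset.order_trans)

lemma zero_sum_free_nonzero: "zero_sum_free U \<Longrightarrow> x \<in># U \<Longrightarrow> x \<noteq> 0"
  unfolding zero_sum_free_def using mset_subset_eq_single[of x U] by fastforce

lemma zero_sum_free_add_mset_minus_notin:
  fixes U :: "'a::ab_group_add multiset"
  assumes "zero_sum_free (add_mset x U)"
  shows "- x \<notin> subset_sums U"
proof
  assume "- x \<in> subset_sums U"
  then obtain V where "V \<subseteq># U" "- x = sum_mset V"
    by (auto simp: subset_sums_iff)
  then have "add_mset x V \<subseteq># add_mset x U" "sum_mset (add_mset x V) = 0"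
    by (simp_all flip: \<open>- x = sum_mset V\<close>)
  moreover have "add_mset x V \<noteq> {#}"
    by simp
  ultimately show False
    using assms unfolding zero_sum_free_def by blast
qed

lemma one_le_size_iff: "1 \<le> size V \<longleftrightarrow> V \<noteq> {#}"
  by (simp add: Suc_le_eq nonempty_has_size)

lemma Sigma_set_eq_subset_sums:
  assumes "zero_sum_free U"
  shows "Sigma_set U = subset_sums U - {0}"
proof -
  have "Sigma_set U = {sum_mset V | V. V \<subseteq># U \<and> V \<noteq> {#}}"
    unfolding Sigma_set_def one_le_size_iff ..
  also have "\<dots> = subset_sums U - {0}"
    using assms unfolding subset_sums_def zero_sum_free_def by force
  finally show ?thesis .
qed

lemma minimal_zero_sum_iff:
  "minimal_zero_sum S \<longleftrightarrow>
     sum_mset S = 0 \<and> (\<forall>V. V \<subseteq># S \<longrightarrow> V \<noteq> {#} \<longrightarrow> V \<noteq> S \<longrightarrow> sum_mset V \<noteq> 0)"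
proof -
  have "V \<subseteq># S \<Longrightarrow> size V < size S \<longleftrightarrow> V \<noteq> S" for V
    using mset_subset_size subset_mset.le_imp_less_or_eq by auto
  then show ?thesis
    unfolding minimal_zero_sum_def one_le_size_iff by blast
qed

lemma minimal_zero_sum_iff_containing:
  fixes S :: "'a::ab_group_add multiset"
  assumes "x \<in># S"
  shows "minimal_zero_sum S \<longleftrightarrow>
     sum_mset S = 0 \<and> (\<forall>V. V \<subseteq># S \<longrightarrow> x \<in># V \<longrightarrow> V \<noteq> S \<longrightarrow> sum_mset V \<noteq> 0)"
proof -
  have "sum_mset V \<noteq> 0"
    if S0: "sum_mset S = 0"
      and containing: "\<forall>V. V \<subseteq># S \<longrightarrow> x \<in># V \<longrightarrow> V \<noteq> S \<longrightarrow> sum_mset V \<noteq> 0"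
      and V: "V \<subseteq># S" "V \<noteq> {#}" "V \<noteq> S" for V
  proof (cases "x \<in># V")
    case True
    with containing V show ?thesis
      by blast
  next
    case False
    (* then the complement S - V contains x and has the opposite sum *)
    with assms have "x \<in># S - V"
      by (simp add: in_diff_count not_in_iff)
    moreover have "S - V \<noteq> S"
      using V(1,2) by (metis add_cancel_left_left subset_mset.add_diff_inverse)
    moreover have "sum_mset (S - V) = - sum_mset V"
      using S0 V(1) by (simp add: sum_mset_diff)
    ultimately show ?thesis
      using containing by auto
  qed
  moreover have "x \<in># V \<Longrightarrow> V \<noteq> {#}" for V
    by auto
  ultimately show ?thesis
    unfolding minimal_zero_sum_iff by blast
qed

lemma minimal_zero_sum_proper_sum_nonzero:
  "minimal_zero_sum S \<Longrightarrow> V \<subseteq># S \<Longrightarrow> V \<noteq> {#} \<Longrightarrow> size V < size S \<Longrightarrow> sum_mset V \<noteq> 0"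
  unfolding minimal_zero_sum_def one_le_size_iff by blast

lemma minimal_zero_sum_remove1_zero_sum_free:
  assumes "minimal_zero_sum S" "g \<in># S"
  shows "zero_sum_free (S - {#g#})"
  unfolding zero_sum_free_def
proof (intro allI impI)
  fix V assume "V \<subseteq># S - {#g#}" "V \<noteq> {#}"
  moreover have "size (S - {#g#}) < size S"
    using assms(2) by (rule size_Diff1_less)
  ultimately show "sum_mset V \<noteq> 0"
    by (intro minimal_zero_sum_proper_sum_nonzero[OF assms(1)])
      (auto intro: subset_mset.order_trans dest: size_mset_mono)
qed

lemma nsmul_image_atMost_Suc:
  "(\<lambda>j. nsmul j x) ` {..Suc k} = (\<lambda>j. nsmul j x) ` {..k} \<union> (+) x ` (\<lambda>j. nsmul j x) ` {..k}"
proof -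
  have "{..Suc k} = {..k} \<union> Suc ` {..k}"
    by (auto simp: le_Suc_eq)
  then show ?thesis
    by (simp add: image_Un image_image add.commute)
qed

lemma subset_sums_replicate_mset:
  "subset_sums (replicate_mset k x) = (\<lambda>j. nsmul j x) ` {..k}"
  by (induction k) (simp_all add: subset_sums_add_mset nsmul_image_atMost_Suc)

lemma multiple_pattern_free_mono:
  "multiple_pattern_free U \<Longrightarrow> V \<subseteq># U \<Longrightarrow> multiple_pattern_free V"
  unfolding multiple_pattern_free_def by (meson subset_mset.order_trans)

lemma sum_mset_eq_nsmul_if_subset_sums_progression:
  fixes U :: "'a::ab_group_add multiset"
  assumes w: "- w \<notin> subset_sums U" and U: "subset_sums U = (\<lambda>j. nsmul j w) ` {..M}"
  shows "sum_mset U = nsmul M w"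
proof -
  have "sum_mset U \<in> subset_sums U"
    by (simp add: sum_mset_in_subset_sums)
  then obtain j where j: "j \<le> M" "sum_mset U = nsmul j w"
    unfolding U by auto
  have "\<not> j < M"
  proof
    assume "j < M"
    then have "nsmul (Suc j) w \<in> subset_sums U"
      unfolding U by (intro image_eqI[of _ _ "Suc j"]) auto
    then have "sum_mset U - nsmul (Suc j) w \<in> subset_sums U"
      by (rule sum_mset_minus_in_subset_sums)
    with w j(2) show False
      by simp
  qed
  with j show ?thesis
    by simp
qed

section \<open>Multisets with two distinct elements\<close>

lemma card_set_mset_le_Suc_remove1:
  "card (set_mset U) \<le> Suc (card (set_mset (U - {#w#})))"
proof -
  have "set_mset U \<subseteq> insert w (set_mset (U - {#w#}))"
    by (auto simp: in_diff_count split: if_splits)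
  then have "card (set_mset U) \<le> card (insert w (set_mset (U - {#w#})))"
    by (rule card_mono[rotated]) simp
  also have "\<dots> \<le> Suc (card (set_mset (U - {#w#})))"
    by (rule card_insert_le_m1) simp_all
  finally show ?thesis .
qed

lemma eq_add_mset_replicate_mset_if_set_mset_pair:
  assumes "set_mset U = {a, b}" "a \<noteq> b" "count U b = 1"
  shows "U = add_mset b (replicate_mset (count U a) a)"
proof (rule multiset_eqI)
  fix x
  show "count U x = count (add_mset b (replicate_mset (count U a) a)) x"
    using assms by (cases "x \<in> {a, b}") (auto simp: not_in_iff[symmetric])
qed

lemma two_values_cases:
  assumes "2 \<le> card (set_mset U)"
  obtains a b k where "a \<noteq> b" "1 \<le> k" "U = add_mset b (replicate_mset k a)"
  | w1 w2 where "w1 \<noteq> w2" "w1 \<in># U" "w2 \<in># U"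
      "2 \<le> card (set_mset (U - {#w1#}))" "2 \<le> card (set_mset (U - {#w2#}))"
proof (cases "card (set_mset U) = 2")
  case False
  obtain w1 w2 where "w1 \<in># U" "w2 \<in># U" "w1 \<noteq> w2"
    using assms card_le_Suc0_iff_eq[of "set_mset U"] by auto
  moreover have "2 \<le> card (set_mset (U - {#w#}))" for w
    using card_set_mset_le_Suc_remove1[of U w] assms False by simp
  ultimately show ?thesis
    using that(2) by blast
next
  case True
  then obtain a b where ab: "set_mset U = {a, b}" "a \<noteq> b"
    by (auto simp: card_2_iff)
  then have "1 \<le> count U a" "1 \<le> count U b"
    by (auto simp: Suc_le_eq)
  then consider "count U b = 1" | "count U a = 1" | "2 \<le> count U a" "2 \<le> count U b"
    by linarith
  then show ?thesis
  proof cases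
    case 1
    with ab have "U = add_mset b (replicate_mset (count U a) a)"
      by (intro eq_add_mset_replicate_mset_if_set_mset_pair)
    with ab(2) \<open>1 \<le> count U a\<close> show ?thesis
      by (rule that(1))
  next
    case 2
    with ab have "U = add_mset a (replicate_mset (count U b) b)"
      by (intro eq_add_mset_replicate_mset_if_set_mset_pair) (auto simp: insert_commute)
    with ab(2) \<open>1 \<le> count U b\<close> show ?thesis
      by (intro that(1)[of b a]) simp_all
  next
    case 3
    then have "set_mset (U - {#a#}) = set_mset U" "set_mset (U - {#b#}) = set_mset U"
      by (auto intro!: more_than_one_mset_mset_diff simp: in_diff_count)
    with ab True show ?thesis
      by (intro that(2)[of a b]) auto
  qed
qed

lemma obtain_remove1_two_values_or_small:
  assumes "2 \<le> card (set_mset T)"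
  obtains g where "g \<in># T" "2 \<le> card (set_mset (T - {#g#})) \<or> size (T - {#g#}) \<le> 1"
  using assms
proof (cases rule: two_values_cases)
  case (1 a b k)
  then have "a \<in># T" "T - {#a#} = add_mset b (replicate_mset (k - 1) a)"
    by (cases k; simp)+
  show ?thesis
  proof (cases "k = 1")
    case True
    with \<open>T - {#a#} = _\<close> show ?thesis
      by (intro that[OF \<open>a \<in># T\<close>]) simp
  next
    case False
    with \<open>1 \<le> k\<close> \<open>T - {#a#} = _\<close> have "set_mset (T - {#a#}) = {a, b}"
      by auto
    with \<open>a \<noteq> b\<close> show ?thesis
      by (intro that[OF \<open>a \<in># T\<close>]) simp
  qed
next
  case (2 w1 w2)
  then show ?thesis
    using that by blast
qed

section \<open>Counting subset sums\<close>

lemma disjoint_translate_nsmul_image: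
  fixes a b :: "'a::ab_group_add"
  assumes z: "zero_sum_free (add_mset b (replicate_mset k a))"
    and mp: "multiple_pattern_free (add_mset b (replicate_mset k a))" and "a \<noteq> b"
  shows "(\<lambda>j. nsmul j a) ` {..k} \<inter> (+) b ` (\<lambda>j. nsmul j a) ` {..k} = {}"
proof (rule ccontr)
  assume "(\<lambda>j. nsmul j a) ` {..k} \<inter> (+) b ` (\<lambda>j. nsmul j a) ` {..k} \<noteq> {}"
  then obtain i j where ij: "i \<le> k" "j \<le> k" "nsmul j a = b + nsmul i a"
    by auto
  have sub: "add_mset b (replicate_mset j a) \<subseteq># add_mset b (replicate_mset k a)" if "j \<le> k" for j
    using that by (simp add: replicate_mset_msubseteq_iff)
  show False
  proof (cases "i < j")
    case True
    then have b: "b = nsmul (j - i) a"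
      using ij(3) by (simp add: nsmul_diff)
    with \<open>a \<noteq> b\<close> have "j - i \<noteq> 1"
      by auto
    with \<open>i < j\<close> have "2 \<le> j - i"
      by simp
    moreover have "add_mset (nsmul (j - i) a) (replicate_mset (j - i) a)
        \<subseteq># add_mset b (replicate_mset k a)"
      using sub[of "j - i"] ij(2) b by simp
    ultimately show False
      using mp unfolding multiple_pattern_free_def by blast
  next
    case False
    then have "sum_mset (add_mset b (replicate_mset (i - j) a)) = b + nsmul i a - nsmul j a"
      by (simp add: nsmul_diff)
    also have "\<dots> = 0"
      by (simp add: ij(3))
    finally have "sum_mset (add_mset b (replicate_mset (i - j) a)) = 0" .
    moreover have "add_mset b (replicate_mset (i - j) a) \<subseteq># add_mset b (replicate_mset k a)"
      using ij(1) by (intro sub) simp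
    ultimately show False
      using z unfolding zero_sum_free_def by (metis empty_not_add_mset)
  qed
qed

context prime_cyclic_group
begin

lemma subset_sums_small_increase:
  fixes U :: "'a multiset"
  assumes z: "zero_sum_free U" and w: "w \<in># U"
    and small: "card (subset_sums U) \<le> card (subset_sums (U - {#w#})) + 1"
  obtains M where "M + 2 \<le> CARD('a)" "card (subset_sums U) = M + 2"
    "sum_mset U = nsmul (Suc M) w"
proof -
  define U' where "U' = U - {#w#}"
  have U: "U = add_mset w U'"
    unfolding U'_def using w by simp
  have w0: "w \<noteq> 0"
    using zero_sum_free_nonzero[OF z w] .
  have "- w \<notin> subset_sums U'"
    using z unfolding U by (rule zero_sum_free_add_mset_minus_notin)
  moreover have "card ((+) w ` subset_sums U' \<union> subset_sums U') \<le> card (subset_sums U') + 1"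
    using small unfolding U'_def[symmetric] by (simp add: U subset_sums_add_mset Un_commute)
  ultimately obtain M where M: "M + 2 \<le> CARD('a)" "subset_sums U' = (\<lambda>j. nsmul j w) ` {..M}"
    using progression_if_small_translate[OF w0 zero_in_subset_sums] by blast
  have "subset_sums U = (\<lambda>j. nsmul j w) ` {..Suc M}"
    unfolding U subset_sums_add_mset M(2) nsmul_image_atMost_Suc ..
  then have "card (subset_sums U) = M + 2"
    using card_nsmul_image_atMost[OF w0, of "Suc M"] M(1) by simp
  moreover have "sum_mset U = nsmul (Suc M) w"
    using sum_mset_eq_nsmul_if_subset_sums_progression[OF \<open>- w \<notin> _\<close> M(2)]
    unfolding U by (simp add: add.commute)
  ultimately show ?thesis
    using M(1) that by blast
qed

lemma count_lt_card_if_zero_sum_free: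
  fixes U :: "'a multiset"
  assumes z: "zero_sum_free U"
  shows "count U a < CARD('a)"
proof (rule ccontr)
  assume "\<not> count U a < CARD('a)"
  then have "replicate_mset CARD('a) a \<subseteq># U"
    by (simp flip: count_le_replicate_mset_subset_eq)
  moreover have "replicate_mset CARD('a) a \<noteq> {#}"
    using card_ge_2 by simp
  moreover have "sum_mset (replicate_mset CARD('a) a) = 0"
    by simp
  ultimately show False
    using z unfolding zero_sum_free_def by blast
qed

lemma card_subset_sums_two_values:
  fixes a b :: 'a and k :: nat
  defines "U \<equiv> add_mset b (replicate_mset k a)"
  assumes z: "zero_sum_free U" and mp: "multiple_pattern_free U"
    and "a \<noteq> b" "1 \<le> k"
  shows "2 * size U \<le> card (subset_sums U)"
proof -
  have "a \<in># U"
    unfolding U_def using \<open>1 \<le> k\<close> by simp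
  then have a0: "a \<noteq> 0"
    by (rule zero_sum_free_nonzero[OF z])
  have "k < CARD('a)"
    using count_lt_card_if_zero_sum_free[OF z, of a] \<open>a \<noteq> b\<close> unfolding U_def by simp
  define P where "P = (\<lambda>j. nsmul j a) ` {..k}"
  have "card P = Suc k"
    unfolding P_def using card_nsmul_image_atMost[OF a0 \<open>k < CARD('a)\<close>] .
  moreover have "card ((+) b ` P) = card P"
    by (simp add: card_image)
  moreover have "P \<inter> (+) b ` P = {}"
    unfolding P_def using z mp \<open>a \<noteq> b\<close> unfolding U_def by (rule disjoint_translate_nsmul_image)
  ultimately have "card (subset_sums U) = 2 * Suc k"
    unfolding U_def subset_sums_add_mset subset_sums_replicate_mset P_def[symmetric]
    by (simp add: card_Un_disjoint)
  then show ?thesis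
    unfolding U_def by simp
qed

theorem card_subset_sums_ge_twice_size:
  fixes U :: "'a multiset"
  assumes "zero_sum_free U" "multiple_pattern_free U" "2 \<le> card (set_mset U)"
  shows "2 * size U \<le> card (subset_sums U)"
  using assms
proof (induction "size U" arbitrary: U rule: less_induct)
  case less
  from less.prems(3) show ?case
  proof (cases rule: two_values_cases)
    case (1 a b k)
    with less.prems(1,2) show ?thesis
      using card_subset_sums_two_values by blast
  next
    case (2 w1 w2)
    have IH: "2 * size (U - {#w#}) \<le> card (subset_sums (U - {#w#}))"
      if "w \<in># U" "2 \<le> card (set_mset (U - {#w#}))" for w
    proof (rule less.hyps[OF size_Diff1_less[OF that(1)]])
      show "zero_sum_free (U - {#w#})"
        using less.prems(1) by (rule zero_sum_free_mono) simp
      show "multiple_pattern_free (U - {#w#})"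
        using less.prems(2) by (rule multiple_pattern_free_mono) simp
    qed (rule that(2))
    (* If removing w1 or w2 loses at most one subset sum, then sum U = (M + 1) w1 = (M + 1) w2
       with the same M < p - 1. *)
    show ?thesis
    proof (rule ccontr)
      assume "\<not> ?thesis"
      then have small: "card (subset_sums U) \<le> card (subset_sums (U - {#w#})) + 1"
        if "w \<in># U" "2 \<le> card (set_mset (U - {#w#}))" for w
        using IH[OF that] that(1) by (simp add: size_Diff_singleton)
      obtain M1 where M1: "M1 + 2 \<le> CARD('a)" "card (subset_sums U) = M1 + 2"
        "sum_mset U = nsmul (Suc M1) w1"
        using subset_sums_small_increase[OF less.prems(1) 2(2) small[OF 2(2,4)]] .
      obtain M2 where M2: "card (subset_sums U) = M2 + 2" "sum_mset U = nsmul (Suc M2) w2"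
        using subset_sums_small_increase[OF less.prems(1) 2(3) small[OF 2(3,5)]] .
      have "nsmul (Suc M1) (w1 - w2) = 0"
        using M1 M2 by (simp add: nsmul_diff_distrib)
      moreover have "w1 - w2 \<noteq> 0"
        using \<open>w1 \<noteq> w2\<close> by simp
      ultimately have "CARD('a) dvd Suc M1"
        using nsmul_eq_0_iff by blast
      with M1(1) show False
        by (simp add: nat_dvd_not_less)
    qed
  qed
qed

lemma card_Sigma_set_ge:
  fixes U :: "'a multiset"
  assumes z: "zero_sum_free U" and mp: "multiple_pattern_free U"
    and U: "2 \<le> card (set_mset U) \<or> size U \<le> 1"
  shows "2 * int (size U) - 1 \<le> int (card (Sigma_set U))"
proof -
  have "2 * size U \<le> card (subset_sums U)"
  proof (cases "2 \<le> card (set_mset U)")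
    case True
    with z mp show ?thesis
      by (rule card_subset_sums_ge_twice_size)
  next
    case False
    with U have "size U = 0 \<or> size U = 1"
      by linarith
    then have "U = {#} \<or> (\<exists>u. U = {#u#})"
      by (metis size_1_singleton_mset size_eq_0_iff_empty)
    then show ?thesis
      using zero_sum_free_nonzero[OF z] by (auto simp: subset_sums_add_mset)
  qed
  moreover have "card (Sigma_set U) = card (subset_sums U) - 1"
    unfolding Sigma_set_eq_subset_sums[OF z]
    using zero_in_subset_sums by (rule card_Diff_singleton)
  moreover have "0 < card (subset_sums U)"
    using zero_in_subset_sums by (auto simp: card_gt_0_iff)
  ultimately show ?thesis
    by linarith
qed

end

section \<open>Unsplittable sequences\<close>

lemma minimal_zero_sum_split:
  fixes R :: "'a::ab_group_add multiset"
  assumes m: "minimal_zero_sum (add_mset h R)" and w: "w \<notin> subset_sums R"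
  shows "minimal_zero_sum (add_mset (- w) (add_mset (h + w) R))"
proof -
  have sum_R: "sum_mset R = - h"
    using m unfolding minimal_zero_sum_def by (simp add: eq_neg_iff_add_eq_0 add.commute)
  have "sum_mset (add_mset (- w) V'') \<noteq> 0"
    if "V'' \<subseteq># add_mset (h + w) R" "add_mset (- w) V'' \<noteq> add_mset (- w) (add_mset (h + w) R)"
    for V''
    using that(1)
  proof (cases rule: subseteq_add_mset_cases)
    case 1
    with w show ?thesis
      using sum_mset_in_subset_sums[of V'' R] by (auto simp: add_eq_0_iff)
  next
    case (2 V')
    with that(2) have "V' \<noteq> R"
      by auto
    with 2(2) have "sum_mset (add_mset h V') \<noteq> 0"
      by (intro minimal_zero_sum_proper_sum_nonzero[OF m])
        (auto dest: mset_subset_size subset_mset.le_imp_less_or_eq)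
    with 2(1) show ?thesis
      by (simp add: algebra_simps)
  qed
  moreover have "sum_mset (add_mset (- w) (add_mset (h + w) R)) = 0"
    using sum_R by simp
  ultimately show ?thesis
    by (auto simp: minimal_zero_sum_iff_containing[of "- w"] dest!: multi_member_split)
qed

lemma unsplittable_subset_sums_remove1:
  fixes S :: "'a::ab_group_add multiset"
  assumes u: "unsplittable S" and h: "h \<in># S"
  shows "subset_sums (S - {#h#}) = UNIV"
proof -
  have "w \<in> subset_sums (S - {#h#})" for w
  proof (rule ccontr)
    assume "w \<notin> subset_sums (S - {#h#})"
    moreover have "minimal_zero_sum (add_mset h (S - {#h#}))"
      using u h unfolding unsplittable_def by simp
    ultimately have "minimal_zero_sum (S - {#h#} + {#- w, h + w#})"
      using minimal_zero_sum_split by (simp add: add_mset_commute)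
    moreover have "- w + (h + w) = h"
      by simp
    ultimately show False
      using u h unfolding unsplittable_def by blast
  qed
  then show ?thesis
    by blast
qed

lemma zero_sum_free_count_le_if_sum_eq_minus:
  fixes R :: "'a::ab_group_add multiset"
  assumes z: "zero_sum_free R" and Z: "Z \<subseteq># R" "sum_mset Z = - x"
  shows "count R x \<le> count Z x"
proof (rule ccontr)
  assume "\<not> count R x \<le> count Z x"
  have "add_mset x Z \<subseteq># R"
    unfolding subseteq_mset_def
  proof
    fix e
    show "count (add_mset x Z) e \<le> count R e"
      using Z(1) \<open>\<not> count R x \<le> count Z x\<close> by (cases "e = x") (auto simp: subseteq_mset_def)
  qed
  moreover have "sum_mset (add_mset x Z) = 0"
    using Z(2) by simp
  ultimately show False
    using z unfolding zero_sum_free_def by (metis empty_not_add_mset)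
qed

lemma unsplittable_multiple_pattern_free:
  fixes S :: "'a::ab_group_add multiset"
  assumes u: "unsplittable S"
  shows "multiple_pattern_free S"
  unfolding multiple_pattern_free_def
proof (intro allI impI notI)
  fix a x
  assume a: "2 \<le> a" and sub: "add_mset (nsmul a x) (replicate_mset a x) \<subseteq># S"
  define y where "y = nsmul a x"
  define R where "R = S - {#y#}"
  have S: "S = add_mset y R"
    unfolding R_def y_def using sub by (simp add: insert_subset_eq_iff)
  have m: "minimal_zero_sum S"
    using u unfolding unsplittable_def by blast
  have "y \<in># S"
    unfolding S by simp
  then have "- x \<in> subset_sums R"
    unfolding R_def using unsplittable_subset_sums_remove1[OF u] by blast
  then obtain Z where Z: "Z \<subseteq># R" "sum_mset Z = - x"
    unfolding subset_sums_iff by auto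
  have "replicate_mset a x \<subseteq># R"
    using sub unfolding S y_def by simp
  then have "a \<le> count R x"
    by (simp only: count_le_replicate_mset_subset_eq)
  also have "count R x \<le> count Z x"
    using minimal_zero_sum_remove1_zero_sum_free[OF m \<open>y \<in># S\<close>] Z unfolding R_def
    by (rule zero_sum_free_count_le_if_sum_eq_minus)
  finally have "a \<le> count Z x" .
  then obtain Z1 where Z1: "Z = Z1 + replicate_mset a x"
    by (metis count_le_replicate_mset_subset_eq subset_mset.diff_add)
  (* y + x + Z1 is a proper zero-sum subsequence, since y = a x and Z1 sums to - x - a x *)
  define W where "W = add_mset y (add_mset x Z1)"
  have "add_mset x Z1 \<subseteq># Z"
    unfolding Z1 using a by (cases a) simp_all
  then have "W \<subseteq># S"
    unfolding W_def S using Z(1) by (simp add: subset_mset.order_trans)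
  moreover have "size W < size S"
    using size_mset_mono[OF Z(1)] a unfolding W_def S Z1 by simp
  ultimately have "sum_mset W \<noteq> 0"
    by (intro minimal_zero_sum_proper_sum_nonzero[OF m]) (simp_all add: W_def)
  moreover have "sum_mset Z1 = - x - nsmul a x"
    using Z(2) unfolding Z1 by (simp add: eq_diff_eq)
  ultimately show False
    unfolding W_def y_def by simp
qed

theorem lemma2p10:
  fixes p :: nat and S T :: "'a::{ab_group_add, finite} multiset"
  assumes "prime p"
    and "CARD('a) = p"
    and "cyclic_group TYPE('a)"
    and "unsplittable S"
    and "T \<subseteq># S"
    and "card (set_mset T) \<ge> 2"
  shows "\<exists>g \<in># T. int (card (Sigma_set (T - {#g#}))) \<ge> 2 * int (size (T - {#g#})) - 1"
proof -
  interpret prime_cyclic_group "TYPE('a)"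
    using assms(1-3) by unfold_locales simp_all
  obtain g where g: "g \<in># T" "2 \<le> card (set_mset (T - {#g#})) \<or> size (T - {#g#}) \<le> 1"
    using obtain_remove1_two_values_or_small assms(6) by blast
  have "g \<in># S"
    using assms(5) g(1) by (rule mset_subset_eqD)
  have sub: "T - {#g#} \<subseteq># S - {#g#}"
    using assms(5) \<open>g \<in># S\<close> by (simp add: subset_eq_diff_conv insert_DiffM)
  have "minimal_zero_sum S"
    using assms(4) unfolding unsplittable_def by blast
  then have "zero_sum_free (T - {#g#})"
    using minimal_zero_sum_remove1_zero_sum_free[OF _ \<open>g \<in># S\<close>] sub zero_sum_free_mono by blast
  moreover have "multiple_pattern_free (T - {#g#})"
    using unsplittable_multiple_pattern_free[OF assms(4)] sub
    by (meson diff_subset_eq_self multiple_pattern_free_mono subset_mset.order_trans)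
  ultimately show ?thesis
    using card_Sigma_set_ge g by blast
qed

end
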